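(* Let $k$ be an infinite field of characteristic $0$, and let $(F,p)$ be the free Lie algebra with projection-derivation over $k$ with free generators $m_1,\dots,m_n$. Put $r=\mathrm{id}_F-p$. Then the representation $(\ker p,\mathrm{im}\,p)$ (with action $l\circ v=[l,v]$) is a free representation with the pair of sets of free generators $\{X,Y\}$, where $X=\{r(m_1),\dots,r(m_n)\}$ and $Y=\{p(m_1),\dots,p(m_n)\}$.
   Context: A Lie algebra with projection-derivation is a Lie algebra $M$ over $k$ with a linear map $p:M\to M$ such that $p(p(m))=p(m)$ and $p[m_1,m_2]=[p(m_1),m_2]+[m_1,p(m_2)]$; homomorphisms are Lie homomorphisms commuting with $p$; these form a variety, so free objects exist. For such $(M,p)$, $\ker p$ is a Lie subalgebra and $\mathrm{im}\,p$ is a $\ker p$-module via $l\circ v=[l,v]$. A representation $(L,V)$ is a Lie algebra $L$ with an $L$-module $V$; a homomorphism $(\varphi,\psi):(L_1,V_1)\to(L_2,V_2)$ is a Lie homomorphism $\varphi$ and linear $\psi$ with $\varphi(l)\circ\psi(v)=\psi(l\circ v)$. $(L,V)$ is free with pair of sets of free generators $\{X,Y\}$ ($X\subset L$, $Y\subset V$) if for every representation $(P,U)$ every pair of maps $X\to P$, $Y\to U$ extends to a homomorphism $(L,V)\to(P,U)$. *)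

theory Defs
  imports Main
begin

record ('k, 'a) vspace =
  vcar  :: "'a set"
  vadd  :: "'a \<Rightarrow> 'a \<Rightarrow> 'a"
  vzero :: "'a"
  vsmul :: "'k \<Rightarrow> 'a \<Rightarrow> 'a"

record ('k, 'a) liealg = "('k, 'a) vspace" +
  lbr :: "'a \<Rightarrow> 'a \<Rightarrow> 'a"

definition vsub :: "('k::field, 'a, 'b) vspace_scheme \<Rightarrow> 'a \<Rightarrow> 'a \<Rightarrow> 'a" where
  "vsub V x y = vadd V x (vsmul V (-1) y)"

definition vector_space_on :: "('k::field, 'a, 'b) vspace_scheme \<Rightarrow> bool" where
  "vector_space_on V \<longleftrightarrow>
     vzero V \<in> vcar V
   \<and> (\<forall>x\<in>vcar V. \<forall>y\<in>vcar V. vadd V x y \<in> vcar V)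
   \<and> (\<forall>a. \<forall>x\<in>vcar V. vsmul V a x \<in> vcar V)
   \<and> (\<forall>x\<in>vcar V. \<forall>y\<in>vcar V. \<forall>z\<in>vcar V. vadd V (vadd V x y) z = vadd V x (vadd V y z))
   \<and> (\<forall>x\<in>vcar V. \<forall>y\<in>vcar V. vadd V x y = vadd V y x)
   \<and> (\<forall>x\<in>vcar V. vadd V (vzero V) x = x)
   \<and> (\<forall>x\<in>vcar V. \<exists>y\<in>vcar V. vadd V x y = vzero V)
   \<and> (\<forall>a. \<forall>x\<in>vcar V. \<forall>y\<in>vcar V. vsmul V a (vadd V x y) = vadd V (vsmul V a x) (vsmul V a y))
   \<and> (\<forall>a b. \<forall>x\<in>vcar V. vsmul V (a + b) x = vadd V (vsmul V a x) (vsmul V b x))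
   \<and> (\<forall>a b. \<forall>x\<in>vcar V. vsmul V a (vsmul V b x) = vsmul V (a * b) x)
   \<and> (\<forall>x\<in>vcar V. vsmul V 1 x = x)"

definition linear_map_on ::
  "('k::field, 'a, 'b) vspace_scheme \<Rightarrow> ('k, 'c, 'd) vspace_scheme \<Rightarrow> ('a \<Rightarrow> 'c) \<Rightarrow> bool" where
  "linear_map_on V W f \<longleftrightarrow>
     (\<forall>x\<in>vcar V. f x \<in> vcar W)
   \<and> (\<forall>x\<in>vcar V. \<forall>y\<in>vcar V. f (vadd V x y) = vadd W (f x) (f y))
   \<and> (\<forall>a. \<forall>x\<in>vcar V. f (vsmul V a x) = vsmul W a (f x))"

definition lie_algebra :: "('k::field, 'a) liealg \<Rightarrow> bool" where
  "lie_algebra L \<longleftrightarrow>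
     vector_space_on L
   \<and> (\<forall>x\<in>vcar L. \<forall>y\<in>vcar L. lbr L x y \<in> vcar L)
   \<and> (\<forall>x\<in>vcar L. \<forall>y\<in>vcar L. \<forall>z\<in>vcar L.
        lbr L (vadd L x y) z = vadd L (lbr L x z) (lbr L y z)
      \<and> lbr L z (vadd L x y) = vadd L (lbr L z x) (lbr L z y))
   \<and> (\<forall>a. \<forall>x\<in>vcar L. \<forall>y\<in>vcar L.
        lbr L (vsmul L a x) y = vsmul L a (lbr L x y)
      \<and> lbr L x (vsmul L a y) = vsmul L a (lbr L x y))
   \<and> (\<forall>x\<in>vcar L. lbr L x x = vzero L)
   \<and> (\<forall>x\<in>vcar L. \<forall>y\<in>vcar L. \<forall>z\<in>vcar L.
        vadd L (vadd L (lbr L x (lbr L y z)) (lbr L y (lbr L z x))) (lbr L z (lbr L x y)) = vzero L)"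

definition lie_hom :: "('k::field, 'a) liealg \<Rightarrow> ('k, 'c) liealg \<Rightarrow> ('a \<Rightarrow> 'c) \<Rightarrow> bool" where
  "lie_hom L M f \<longleftrightarrow> linear_map_on L M f
     \<and> (\<forall>x\<in>vcar L. \<forall>y\<in>vcar L. f (lbr L x y) = lbr M (f x) (f y))"

definition representation ::
  "('k::field, 'a) liealg \<Rightarrow> ('k, 'v) vspace \<Rightarrow> ('a \<Rightarrow> 'v \<Rightarrow> 'v) \<Rightarrow> bool" where
  "representation L V act \<longleftrightarrow>
     lie_algebra L \<and> vector_space_on V
   \<and> (\<forall>l\<in>vcar L. \<forall>v\<in>vcar V. act l v \<in> vcar V)
   \<and> (\<forall>l\<in>vcar L. \<forall>l'\<in>vcar L. \<forall>v\<in>vcar V. act (vadd L l l') v = vadd V (act l v) (act l' v))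
   \<and> (\<forall>a. \<forall>l\<in>vcar L. \<forall>v\<in>vcar V. act (vsmul L a l) v = vsmul V a (act l v))
   \<and> (\<forall>l\<in>vcar L. \<forall>v\<in>vcar V. \<forall>w\<in>vcar V. act l (vadd V v w) = vadd V (act l v) (act l w))
   \<and> (\<forall>a. \<forall>l\<in>vcar L. \<forall>v\<in>vcar V. act l (vsmul V a v) = vsmul V a (act l v))
   \<and> (\<forall>l\<in>vcar L. \<forall>l'\<in>vcar L. \<forall>v\<in>vcar V.
        act (lbr L l l') v = vsub V (act l (act l' v)) (act l' (act l v)))"

definition rep_hom ::
  "('k::field, 'a) liealg \<Rightarrow> ('k, 'v) vspace \<Rightarrow> ('a \<Rightarrow> 'v \<Rightarrow> 'v) \<Rightarrow>
   ('k, 'b) liealg \<Rightarrow> ('k, 'w) vspace \<Rightarrow> ('b \<Rightarrow> 'w \<Rightarrow> 'w) \<Rightarrow>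
   ('a \<Rightarrow> 'b) \<Rightarrow> ('v \<Rightarrow> 'w) \<Rightarrow> bool" where
  "rep_hom L1 V1 act1 L2 V2 act2 \<phi> \<psi> \<longleftrightarrow>
     lie_hom L1 L2 \<phi> \<and> linear_map_on V1 V2 \<psi>
   \<and> (\<forall>l\<in>vcar L1. \<forall>v\<in>vcar V1. act2 (\<phi> l) (\<psi> v) = \<psi> (act1 l v))"

definition lpd :: "('k::field, 'a) liealg \<Rightarrow> ('a \<Rightarrow> 'a) \<Rightarrow> bool" where
  "lpd M p \<longleftrightarrow> lie_algebra M \<and> linear_map_on M M p
     \<and> (\<forall>x\<in>vcar M. p (p x) = p x)
     \<and> (\<forall>x\<in>vcar M. \<forall>y\<in>vcar M. p (lbr M x y) = vadd M (lbr M (p x) y) (lbr M x (p y)))"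

definition lpd_hom ::
  "('k::field, 'a) liealg \<Rightarrow> ('a \<Rightarrow> 'a) \<Rightarrow> ('k, 'c) liealg \<Rightarrow> ('c \<Rightarrow> 'c) \<Rightarrow> ('a \<Rightarrow> 'c) \<Rightarrow> bool" where
  "lpd_hom M p N q h \<longleftrightarrow> lie_hom M N h \<and> (\<forall>x\<in>vcar M. h (p x) = q (h x))"

text \<open>Since HOL cannot quantify over types
  inside a formula, the test objects are the LPDs whose carrier lies in the type
  'k list; as k is infinite, this type has cardinality |k|, which bounds the
  cardinality of every finitely generated LPD over k, so this is equivalent to
  freeness in the whole variety.\<close>

definition free_lpd :: "('k::field, 'a) liealg \<Rightarrow> ('a \<Rightarrow> 'a) \<Rightarrow> nat \<Rightarrow> (nat \<Rightarrow> 'a) \<Rightarrow> bool" where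
  "free_lpd F p n m \<longleftrightarrow> lpd F p \<and> (\<forall>i<n. m i \<in> vcar F)
   \<and> (\<forall>(N :: ('k, 'k list) liealg) q f. lpd N q \<and> (\<forall>i<n. f i \<in> vcar N) \<longrightarrow>
        (\<exists>h. lpd_hom F p N q h \<and> (\<forall>i<n. h (m i) = f i)
           \<and> (\<forall>h'. lpd_hom F p N q h' \<and> (\<forall>i<n. h' (m i) = f i) \<longrightarrow> (\<forall>x\<in>vcar F. h' x = h x))))"

definition kerL :: "('k::field, 'a) liealg \<Rightarrow> ('a \<Rightarrow> 'a) \<Rightarrow> ('k, 'a) liealg" where
  "kerL F p = F\<lparr>vcar := {x \<in> vcar F. p x = vzero F}\<rparr>"

definition imV :: "('k::field, 'a) liealg \<Rightarrow> ('a \<Rightarrow> 'a) \<Rightarrow> ('k, 'a) vspace" where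
  "imV F p = \<lparr>vcar = p ` vcar F, vadd = vadd F, vzero = vzero F, vsmul = vsmul F\<rparr>"

end

theory Submission
  imports Defs
begin

text \<open>Given a representation (P, U), the semidirect product P \<ltimes> U with bracket
  [(l, u), (l', u')] = ([l, l'], l \<circ> u' - l' \<circ> u) carries the projection-derivation
  (l, u) \<mapsto> (0, u).  Freeness of (F, p) yields an LPD homomorphism \<Phi> : F \<rightarrow> P \<ltimes> U
  sending m i to (f (r m i), g (p m i)).  Since \<Phi> commutes with the projections, it maps
  ker p into P \<times> 0 and im p into 0 \<times> U, and its two components form the required
  homomorphism of representations; on the generators, \<Phi> (r m i) = (f (r m i), 0) and
  \<Phi> (p m i) = (0, g (p m i)).
  Freeness is only postulated for LPDs carried by the type 'k list, so \<Phi> is first built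
  into the sub-LPD generated by the images of the m i, transported into 'k list along an
  injective encoding of terms (this uses characteristic 0 to encode generator indices).\<close>

locale vsp =
  fixes V :: "('k::field, 'a, 'b) vspace_scheme"
  assumes vs: "vector_space_on V"
begin

lemma zero_closed [simp]: "vzero V \<in> vcar V"
  using vs unfolding vector_space_on_def by auto

lemma add_closed [simp]: "x \<in> vcar V \<Longrightarrow> y \<in> vcar V \<Longrightarrow> vadd V x y \<in> vcar V"
  using vs unfolding vector_space_on_def by auto

lemma smul_closed [simp]: "x \<in> vcar V \<Longrightarrow> vsmul V a x \<in> vcar V"
  using vs unfolding vector_space_on_def by auto

lemma vsub_closed [simp]: "x \<in> vcar V \<Longrightarrow> y \<in> vcar V \<Longrightarrow> vsub V x y \<in> vcar V"
  by (simp add: vsub_def)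

lemma add_assoc:
  "x \<in> vcar V \<Longrightarrow> y \<in> vcar V \<Longrightarrow> z \<in> vcar V \<Longrightarrow> vadd V (vadd V x y) z = vadd V x (vadd V y z)"
  using vs unfolding vector_space_on_def by auto

lemma add_commute: "x \<in> vcar V \<Longrightarrow> y \<in> vcar V \<Longrightarrow> vadd V x y = vadd V y x"
  using vs unfolding vector_space_on_def by auto

lemma add_left_commute:
  "x \<in> vcar V \<Longrightarrow> y \<in> vcar V \<Longrightarrow> z \<in> vcar V \<Longrightarrow> vadd V x (vadd V y z) = vadd V y (vadd V x z)"
  by (metis add_assoc add_commute)

lemmas add_ac = add_assoc add_commute add_left_commute

lemma zero_add [simp]: "x \<in> vcar V \<Longrightarrow> vadd V (vzero V) x = x"
  using vs unfolding vector_space_on_def by auto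

lemma add_zero [simp]: "x \<in> vcar V \<Longrightarrow> vadd V x (vzero V) = x"
  using add_commute zero_add zero_closed by metis

lemma smul_add:
  "x \<in> vcar V \<Longrightarrow> y \<in> vcar V \<Longrightarrow> vsmul V a (vadd V x y) = vadd V (vsmul V a x) (vsmul V a y)"
  using vs unfolding vector_space_on_def by auto

lemma add_smul: "x \<in> vcar V \<Longrightarrow> vsmul V (a + b) x = vadd V (vsmul V a x) (vsmul V b x)"
  using vs unfolding vector_space_on_def by auto

lemma smul_smul [simp]: "x \<in> vcar V \<Longrightarrow> vsmul V a (vsmul V b x) = vsmul V (a * b) x"
  using vs unfolding vector_space_on_def by auto

lemma one_smul [simp]: "x \<in> vcar V \<Longrightarrow> vsmul V 1 x = x"
  using vs unfolding vector_space_on_def by auto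

lemma zero_smul [simp]:
  assumes x: "x \<in> vcar V"
  shows "vsmul V 0 x = vzero V"
proof -
  let ?z = "vsmul V 0 x"
  have zz: "vadd V ?z ?z = ?z" using add_smul[OF x, of 0 0] by simp
  obtain y where y: "y \<in> vcar V" "vadd V ?z y = vzero V"
    using vs x unfolding vector_space_on_def by (meson smul_closed)
  have "vzero V = vadd V (vadd V ?z ?z) y" using zz y by simp
  also have "\<dots> = vadd V ?z (vadd V ?z y)" using add_assoc x y by simp
  also have "\<dots> = ?z" using y x by simp
  finally show ?thesis by simp
qed

lemma smul_zero [simp]: "vsmul V a (vzero V) = vzero V"
  by (metis mult_zero_right smul_smul zero_closed zero_smul)

lemma add_neg [simp]: "x \<in> vcar V \<Longrightarrow> vadd V x (vsmul V (-1) x) = vzero V"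
  using add_smul[of x 1 "-1"] by simp

lemma neg_add [simp]: "x \<in> vcar V \<Longrightarrow> vadd V (vsmul V (-1) x) x = vzero V"
  using add_neg add_commute by simp

lemma eq_of_vsub_eq_zero:
  assumes "x \<in> vcar V" "y \<in> vcar V" "vsub V x y = vzero V"
  shows "x = y"
proof -
  have "vadd V (vsub V x y) y = x" using assms(1,2) by (simp add: vsub_def add_assoc)
  then show ?thesis using assms by simp
qed

text \<open>The linear identity behind the Jacobi identity of a semidirect product.\<close>

lemma vsub_cyclic_sum_eq_zero:
  assumes "t1 \<in> vcar V" "t2 \<in> vcar V" "t3 \<in> vcar V" "t4 \<in> vcar V" "t5 \<in> vcar V" "t6 \<in> vcar V"
  shows "vadd V (vadd V (vsub V (vsub V t1 t2) (vsub V t3 t4)) (vsub V (vsub V t3 t5) (vsub V t6 t2)))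
     (vsub V (vsub V t6 t4) (vsub V t1 t5)) = vzero V"
proof -
  have "vadd V (vadd V (vsub V (vsub V t1 t2) (vsub V t3 t4)) (vsub V (vsub V t3 t5) (vsub V t6 t2)))
      (vsub V (vsub V t6 t4) (vsub V t1 t5)) =
    vadd V (vadd V t1 (vsmul V (-1) t1)) (vadd V (vadd V t2 (vsmul V (-1) t2))
      (vadd V (vadd V t3 (vsmul V (-1) t3)) (vadd V (vadd V t4 (vsmul V (-1) t4))
        (vadd V (vadd V t5 (vsmul V (-1) t5)) (vadd V t6 (vsmul V (-1) t6))))))"
    using assms by (simp add: vsub_def smul_add add_ac del: add_neg neg_add)
  then show ?thesis using assms by simp
qed

end

locale lie_alg =
  fixes L :: "('k::field, 'a) liealg"
  assumes la: "lie_algebra L"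
begin

sublocale vsp L
  using la unfolding lie_algebra_def vsp_def by blast

lemma br_closed [simp]: "x \<in> vcar L \<Longrightarrow> y \<in> vcar L \<Longrightarrow> lbr L x y \<in> vcar L"
  using la unfolding lie_algebra_def by blast

lemma br_add_left:
  "x \<in> vcar L \<Longrightarrow> y \<in> vcar L \<Longrightarrow> z \<in> vcar L \<Longrightarrow> lbr L (vadd L x y) z = vadd L (lbr L x z) (lbr L y z)"
  using la unfolding lie_algebra_def by blast

lemma br_add_right:
  "x \<in> vcar L \<Longrightarrow> y \<in> vcar L \<Longrightarrow> z \<in> vcar L \<Longrightarrow> lbr L z (vadd L x y) = vadd L (lbr L z x) (lbr L z y)"
  using la unfolding lie_algebra_def by blast

lemma br_smul_left [simp]:
  "x \<in> vcar L \<Longrightarrow> y \<in> vcar L \<Longrightarrow> lbr L (vsmul L a x) y = vsmul L a (lbr L x y)"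
  using la unfolding lie_algebra_def by blast

lemma br_smul_right [simp]:
  "x \<in> vcar L \<Longrightarrow> y \<in> vcar L \<Longrightarrow> lbr L x (vsmul L a y) = vsmul L a (lbr L x y)"
  using la unfolding lie_algebra_def by blast

lemma br_self [simp]: "x \<in> vcar L \<Longrightarrow> lbr L x x = vzero L"
  using la unfolding lie_algebra_def by blast

lemma jacobi:
  "x \<in> vcar L \<Longrightarrow> y \<in> vcar L \<Longrightarrow> z \<in> vcar L \<Longrightarrow>
   vadd L (vadd L (lbr L x (lbr L y z)) (lbr L y (lbr L z x))) (lbr L z (lbr L x y)) = vzero L"
  using la unfolding lie_algebra_def by blast

lemma br_zero_left [simp]: "y \<in> vcar L \<Longrightarrow> lbr L (vzero L) y = vzero L"
  using br_smul_left[of "vzero L" y 0] by simp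

lemma br_zero_right [simp]: "y \<in> vcar L \<Longrightarrow> lbr L y (vzero L) = vzero L"
  using br_smul_right[of y "vzero L" 0] by simp

lemma br_anticommute:
  assumes x: "x \<in> vcar L" and y: "y \<in> vcar L"
  shows "lbr L x y = vsmul L (-1) (lbr L y x)"
proof (rule eq_of_vsub_eq_zero)
  have "vzero L = lbr L (vadd L x y) (vadd L x y)" using x y by simp
  also have "\<dots> = vadd L (lbr L x (vadd L x y)) (lbr L y (vadd L x y))"
    by (rule br_add_left) (simp_all add: x y)
  also have "\<dots> = vadd L (vadd L (lbr L x x) (lbr L x y)) (vadd L (lbr L y x) (lbr L y y))"
    using x y by (simp only: br_add_right)
  also have "\<dots> = vadd L (lbr L x y) (lbr L y x)" using x y by simp
  finally show "vsub L (lbr L x y) (vsmul L (-1) (lbr L y x)) = vzero L"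
    using x y by (simp add: vsub_def)
qed (use x y in auto)

lemma br_br:
  assumes x: "x \<in> vcar L" and y: "y \<in> vcar L" and z: "z \<in> vcar L"
  shows "lbr L (lbr L x y) z = vsub L (lbr L x (lbr L y z)) (lbr L y (lbr L x z))"
proof -
  have "lbr L y (lbr L z x) = vsmul L (-1) (lbr L y (lbr L x z))"
    and "lbr L z (lbr L x y) = vsmul L (-1) (lbr L (lbr L x y) z)"
    using br_anticommute[OF z x] br_anticommute[OF z, of "lbr L x y"] x y z by simp_all
  then have "vsub L (vsub L (lbr L x (lbr L y z)) (lbr L y (lbr L x z))) (lbr L (lbr L x y) z) = vzero L"
    using jacobi[OF x y z] by (simp add: vsub_def)
  then show ?thesis
    by (rule eq_of_vsub_eq_zero[rotated 2, symmetric]) (use x y z in simp_all)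
qed

end

locale lie_rep =
  fixes P :: "('k::field, 'p) liealg" and U :: "('k, 'u) vspace" and act :: "'p \<Rightarrow> 'u \<Rightarrow> 'u"
  assumes rp: "representation P U act"
begin

sublocale P: lie_alg P
  using rp unfolding representation_def lie_alg_def by blast

sublocale U: vsp U
  using rp unfolding representation_def vsp_def by blast

lemma act_closed [simp]: "l \<in> vcar P \<Longrightarrow> v \<in> vcar U \<Longrightarrow> act l v \<in> vcar U"
  using rp unfolding representation_def by blast

lemma act_add_left:
  "l \<in> vcar P \<Longrightarrow> l' \<in> vcar P \<Longrightarrow> v \<in> vcar U \<Longrightarrow> act (vadd P l l') v = vadd U (act l v) (act l' v)"
  using rp unfolding representation_def by blast

lemma act_smul_left [simp]: "l \<in> vcar P \<Longrightarrow> v \<in> vcar U \<Longrightarrow> act (vsmul P a l) v = vsmul U a (act l v)"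
  using rp unfolding representation_def by blast

lemma act_add_right:
  "l \<in> vcar P \<Longrightarrow> v \<in> vcar U \<Longrightarrow> w \<in> vcar U \<Longrightarrow> act l (vadd U v w) = vadd U (act l v) (act l w)"
  using rp unfolding representation_def by blast

lemma act_smul_right [simp]: "l \<in> vcar P \<Longrightarrow> v \<in> vcar U \<Longrightarrow> act l (vsmul U a v) = vsmul U a (act l v)"
  using rp unfolding representation_def by blast

lemma act_br:
  "l \<in> vcar P \<Longrightarrow> l' \<in> vcar P \<Longrightarrow> v \<in> vcar U \<Longrightarrow>
   act (lbr P l l') v = vsub U (act l (act l' v)) (act l' (act l v))"
  using rp unfolding representation_def by blast

lemma act_zero_left [simp]: "v \<in> vcar U \<Longrightarrow> act (vzero P) v = vzero U"
  using act_smul_left[of "vzero P" v 0] by simp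

lemma act_zero_right [simp]: "l \<in> vcar P \<Longrightarrow> act l (vzero U) = vzero U"
  using act_smul_right[of l "vzero U" 0] by simp

lemma act_vsub: "l \<in> vcar P \<Longrightarrow> v \<in> vcar U \<Longrightarrow> w \<in> vcar U \<Longrightarrow> act l (vsub U v w) = vsub U (act l v) (act l w)"
  by (simp add: vsub_def act_add_right)

end

lemma vector_space_on_subspace:
  assumes V: "vector_space_on V" and S: "S \<subseteq> vcar V" "vzero V \<in> S"
    "\<forall>x\<in>S. \<forall>y\<in>S. vadd V x y \<in> S" "\<forall>a. \<forall>x\<in>S. vsmul V a x \<in> S"
    and W: "vcar W = S" "vadd W = vadd V" "vzero W = vzero V" "vsmul W = vsmul V"
  shows "vector_space_on W"
proof -
  interpret vsp V by (rule vsp.intro) (rule V)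
  have neg: "\<forall>x\<in>S. \<exists>y\<in>S. vadd V x y = vzero V"
    using S by (metis add_neg subsetD)
  have "\<And>x. x \<in> S \<Longrightarrow> x \<in> vcar V" using S by blast
  then show ?thesis unfolding vector_space_on_def W using S neg
    by (simp add: add_ac smul_add add_smul)
qed

lemma lie_algebra_subalgebra:
  assumes L: "lie_algebra L" and S: "S \<subseteq> vcar L" "vzero L \<in> S"
    "\<forall>x\<in>S. \<forall>y\<in>S. vadd L x y \<in> S" "\<forall>a. \<forall>x\<in>S. vsmul L a x \<in> S"
    "\<forall>x\<in>S. \<forall>y\<in>S. lbr L x y \<in> S"
  shows "lie_algebra (L\<lparr>vcar := S\<rparr>)"
proof -
  interpret lie_alg L by (rule lie_alg.intro) (rule L)
  have "vector_space_on (L\<lparr>vcar := S\<rparr>)" by (rule vector_space_on_subspace[OF vs S(1-4)]) simp_all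
  moreover have "\<And>x. x \<in> S \<Longrightarrow> x \<in> vcar L" using S by blast
  ultimately show ?thesis unfolding lie_algebra_def using S
    by (simp add: br_add_left br_add_right jacobi)
qed

lemma lpd_subalgebra:
  assumes L: "lpd L q" and S: "S \<subseteq> vcar L" "vzero L \<in> S"
    "\<forall>x\<in>S. \<forall>y\<in>S. vadd L x y \<in> S" "\<forall>a. \<forall>x\<in>S. vsmul L a x \<in> S"
    "\<forall>x\<in>S. \<forall>y\<in>S. lbr L x y \<in> S" "\<forall>x\<in>S. q x \<in> S"
  shows "lpd (L\<lparr>vcar := S\<rparr>) q"
proof -
  have "lie_algebra (L\<lparr>vcar := S\<rparr>)"
    using L S(1-5) lie_algebra_subalgebra unfolding lpd_def by blast
  moreover have "\<And>x. x \<in> S \<Longrightarrow> x \<in> vcar L" using S by blast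
  ultimately show ?thesis using L S unfolding lpd_def linear_map_on_def by simp
qed

lemma lpd_hom_subalgebra:
  assumes "lpd_hom F p (L\<lparr>vcar := S\<rparr>) q h" "S \<subseteq> vcar L"
  shows "lpd_hom F p L q h"
  using assms unfolding lpd_hom_def lie_hom_def linear_map_on_def by auto

lemma representation_ker_im:
  assumes F: "lpd F p"
  shows "representation (kerL F p) (imV F p) (lbr F)"
proof -
  interpret lie_alg F using F unfolding lpd_def lie_alg_def by blast
  have pc: "\<And>x. x \<in> vcar F \<Longrightarrow> p x \<in> vcar F"
    and padd: "\<And>x y. x \<in> vcar F \<Longrightarrow> y \<in> vcar F \<Longrightarrow> p (vadd F x y) = vadd F (p x) (p y)"
    and psmul: "\<And>a x. x \<in> vcar F \<Longrightarrow> p (vsmul F a x) = vsmul F a (p x)"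
    and pp: "\<And>x. x \<in> vcar F \<Longrightarrow> p (p x) = p x"
    and pbr: "\<And>x y. x \<in> vcar F \<Longrightarrow> y \<in> vcar F \<Longrightarrow> p (lbr F x y) = vadd F (lbr F (p x) y) (lbr F x (p y))"
    using F unfolding lpd_def linear_map_on_def by blast+
  have p0: "p (vzero F) = vzero F" using psmul[of "vzero F" 0] pc[of "vzero F"] by simp
  define K where "K = {x \<in> vcar F. p x = vzero F}"
  have K: "kerL F p = F\<lparr>vcar := K\<rparr>" by (simp add: kerL_def K_def)
  have lk: "lie_algebra (kerL F p)"
    unfolding K by (rule lie_algebra_subalgebra[OF la]) (auto simp: K_def p0 padd psmul pbr)
  have vi: "vector_space_on (imV F p)"
    by (rule vector_space_on_subspace[OF vs])
      (auto simp: imV_def pc simp flip: padd psmul intro: rev_image_eqI[of "vzero F" _ _ p, OF zero_closed p0[symmetric]])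
  have act_closed: "lbr F l v \<in> p ` vcar F" if lK: "l \<in> K" and v: "v \<in> p ` vcar F" for l v
  proof -
    obtain w where w: "w \<in> vcar F" "v = p w" using v by blast
    have l: "l \<in> vcar F" "p l = vzero F" using lK by (auto simp: K_def)
    have "p (lbr F l v) = lbr F l v" using w l by (simp add: pbr pc pp)
    then show ?thesis using l w pc by (metis br_closed image_eqI)
  qed
  have "\<And>x. x \<in> K \<Longrightarrow> x \<in> vcar F" "\<And>x. x \<in> p ` vcar F \<Longrightarrow> x \<in> vcar F"
    using pc by (auto simp: K_def)
  then show ?thesis
    unfolding representation_def using lk vi act_closed
    by (simp add: K imV_def br_add_left br_add_right br_br vsub_def)
qed

section \<open>The semidirect product of a representation\<close>

definition semidirect :: "('k::field, 'p) liealg \<Rightarrow> ('k, 'u) vspace \<Rightarrow> ('p \<Rightarrow> 'u \<Rightarrow> 'u) \<Rightarrow> ('k, 'p \<times> 'u) liealg"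
  where "semidirect P U act =
    \<lparr>vcar = vcar P \<times> vcar U,
     vadd = \<lambda>x y. (vadd P (fst x) (fst y), vadd U (snd x) (snd y)),
     vzero = (vzero P, vzero U),
     vsmul = \<lambda>a x. (vsmul P a (fst x), vsmul U a (snd x)),
     lbr = \<lambda>x y. (lbr P (fst x) (fst y), vsub U (act (fst x) (snd y)) (act (fst y) (snd x)))\<rparr>"

definition semidirect_proj :: "('k::field, 'p) liealg \<Rightarrow> 'p \<times> 'u \<Rightarrow> 'p \<times> 'u"
  where "semidirect_proj P x = (vzero P, snd x)"

context lie_rep
begin

lemma vector_space_on_semidirect: "vector_space_on (semidirect P U act)"
proof -
  have "\<exists>y\<in>vcar P \<times> vcar U. (vadd P a (fst y), vadd U u (snd y)) = (vzero P, vzero U)"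
    if "a \<in> vcar P" "u \<in> vcar U" for a u
    using that by (intro bexI[of _ "(vsmul P (-1) a, vsmul U (-1) u)"]) auto
  then show ?thesis unfolding vector_space_on_def semidirect_def
    by (simp add: P.add_ac U.add_ac P.smul_add U.smul_add P.add_smul U.add_smul)
qed

lemma jacobi_semidirect:
  assumes "x \<in> vcar (semidirect P U act)" "y \<in> vcar (semidirect P U act)" "z \<in> vcar (semidirect P U act)"
  defines "B \<equiv> lbr (semidirect P U act)" and "A \<equiv> vadd (semidirect P U act)"
  shows "A (A (B x (B y z)) (B y (B z x))) (B z (B x y)) = vzero (semidirect P U act)"
proof -
  obtain a u b v c w where x: "x = (a, u)" and y: "y = (b, v)" and z: "z = (c, w)"
    and abc: "a \<in> vcar P" "b \<in> vcar P" "c \<in> vcar P" and uvw: "u \<in> vcar U" "v \<in> vcar U" "w \<in> vcar U"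
    using assms(1-3) by (auto simp: semidirect_def)
  have "vadd U (vadd U
      (vsub U (vsub U (act a (act b w)) (act a (act c v))) (vsub U (act b (act c u)) (act c (act b u))))
      (vsub U (vsub U (act b (act c u)) (act b (act a w))) (vsub U (act c (act a v)) (act a (act c v)))))
      (vsub U (vsub U (act c (act a v)) (act c (act b u))) (vsub U (act a (act b w)) (act b (act a w))))
    = vzero U"
    by (rule U.vsub_cyclic_sum_eq_zero) (use abc uvw in simp_all)
  then show ?thesis
    using abc uvw P.jacobi[of a b c] by (simp add: x y z A_def B_def semidirect_def act_vsub act_br)
qed

lemma lie_algebra_semidirect: "lie_algebra (semidirect P U act)"
  unfolding lie_algebra_def
proof (intro conjI ballI allI)
  show "vector_space_on (semidirect P U act)" by (rule vector_space_on_semidirect)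
qed (use jacobi_semidirect in \<open>auto simp: semidirect_def P.br_add_left P.br_add_right
  act_add_left act_add_right vsub_def U.smul_add U.add_ac mult.commute\<close>)

lemma lpd_semidirect: "lpd (semidirect P U act) (semidirect_proj P)"
  using lie_algebra_semidirect
  by (auto simp: lpd_def linear_map_on_def semidirect_def semidirect_proj_def vsub_def U.add_ac)

end

lemma rep_hom_semidirect_components:
  assumes F: "lpd F p" and rep: "representation P U act"
    and \<Phi>: "lpd_hom F p (semidirect P U act) (semidirect_proj P) \<Phi>"
  shows "rep_hom (kerL F p) (imV F p) (lbr F) P U act (\<lambda>x. fst (\<Phi> x)) (\<lambda>x. snd (\<Phi> x))"
proof -
  interpret lie_rep P U act by (rule lie_rep.intro) (rule rep)
  let ?SD = "semidirect P U act"
  have pc: "\<And>x. x \<in> vcar F \<Longrightarrow> p x \<in> vcar F"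
    using F unfolding lpd_def linear_map_on_def by blast
  have \<Phi>c: "\<And>x. x \<in> vcar F \<Longrightarrow> fst (\<Phi> x) \<in> vcar P \<and> snd (\<Phi> x) \<in> vcar U"
    and \<Phi>add: "\<And>x y. x \<in> vcar F \<Longrightarrow> y \<in> vcar F \<Longrightarrow> \<Phi> (vadd F x y) = vadd ?SD (\<Phi> x) (\<Phi> y)"
    and \<Phi>smul: "\<And>a x. x \<in> vcar F \<Longrightarrow> \<Phi> (vsmul F a x) = vsmul ?SD a (\<Phi> x)"
    and \<Phi>br: "\<And>x y. x \<in> vcar F \<Longrightarrow> y \<in> vcar F \<Longrightarrow> \<Phi> (lbr F x y) = lbr ?SD (\<Phi> x) (\<Phi> y)"
    and \<Phi>p: "\<And>x. x \<in> vcar F \<Longrightarrow> \<Phi> (p x) = semidirect_proj P (\<Phi> x)"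
    using \<Phi> unfolding lpd_hom_def lie_hom_def linear_map_on_def
    by (auto simp: semidirect_def mem_Times_iff)
  have im: "fst (\<Phi> v) = vzero P" "v \<in> vcar F" if "v \<in> p ` vcar F" for v
    using that \<Phi>p pc by (auto simp: semidirect_proj_def)
  show ?thesis
    unfolding rep_hom_def lie_hom_def linear_map_on_def kerL_def imV_def
    using \<Phi>c \<Phi>add \<Phi>smul \<Phi>br im pc
    by (auto simp: semidirect_def vsub_def)
qed

lemma lpd_hom_semidirect_proj_components:
  assumes F: "lpd F p" and rep: "representation P U act"
    and \<Phi>: "lpd_hom F p (semidirect P U act) (semidirect_proj P) \<Phi>" and x: "x \<in> vcar F"
  shows "fst (\<Phi> (vsub F x (p x))) = fst (\<Phi> x)" and "snd (\<Phi> (p x)) = snd (\<Phi> x)"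
proof -
  interpret lie_rep P U act by (rule lie_rep.intro) (rule rep)
  have px: "p x \<in> vcar F" using F x unfolding lpd_def linear_map_on_def by blast
  have \<Phi>p: "\<Phi> (p x) = (vzero P, snd (\<Phi> x))"
    using \<Phi> x unfolding lpd_hom_def semidirect_proj_def by simp
  have "fst (\<Phi> x) \<in> vcar P"
    using \<Phi> x unfolding lpd_hom_def lie_hom_def linear_map_on_def by (auto simp: semidirect_def)
  then show "fst (\<Phi> (vsub F x (p x))) = fst (\<Phi> x)"
    using \<Phi> x px F \<Phi>p unfolding lpd_hom_def lie_hom_def linear_map_on_def lpd_def
    by (simp add: vsub_def semidirect_def lie_algebra_def vector_space_on_def)
  show "snd (\<Phi> (p x)) = snd (\<Phi> x)" using \<Phi>p by simp
qed

section \<open>Freeness against LPDs of arbitrary type\<close>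

datatype 'k lpd_term =
  Gen nat | Zero | Add "'k lpd_term" "'k lpd_term" | Smul 'k "'k lpd_term"
  | Br "'k lpd_term" "'k lpd_term" | Proj "'k lpd_term"

primrec lpd_eval :: "('k::field, 'a) liealg \<Rightarrow> ('a \<Rightarrow> 'a) \<Rightarrow> (nat \<Rightarrow> 'a) \<Rightarrow> 'k lpd_term \<Rightarrow> 'a"
where
  "lpd_eval L q G (Gen i) = G i"
| "lpd_eval L q G Zero = vzero L"
| "lpd_eval L q G (Add s t) = vadd L (lpd_eval L q G s) (lpd_eval L q G t)"
| "lpd_eval L q G (Smul c t) = vsmul L c (lpd_eval L q G t)"
| "lpd_eval L q G (Br s t) = lbr L (lpd_eval L q G s) (lpd_eval L q G t)"
| "lpd_eval L q G (Proj t) = q (lpd_eval L q G t)"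

lemma lpd_eval_closed:
  assumes "lpd L q" "\<And>i. G i \<in> vcar L"
  shows "lpd_eval L q G t \<in> vcar L"
proof -
  interpret lie_alg L using assms(1) unfolding lpd_def lie_alg_def by blast
  have "\<And>x. x \<in> vcar L \<Longrightarrow> q x \<in> vcar L" using assms(1) unfolding lpd_def linear_map_on_def by blast
  then show ?thesis by (induction t) (auto simp: assms(2))
qed

lemma lpd_generated:
  assumes "lpd L q" "\<And>i. G i \<in> vcar L"
  shows "lpd (L\<lparr>vcar := range (lpd_eval L q G)\<rparr>) q"
proof (rule lpd_subalgebra[OF assms(1)])
  let ?e = "lpd_eval L q G"
  show "range ?e \<subseteq> vcar L" using lpd_eval_closed assms by blast
  show "vzero L \<in> range ?e" using rangeI[of ?e Zero] by simp
  show "\<forall>x\<in>range ?e. \<forall>y\<in>range ?e. vadd L x y \<in> range ?e"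
    using rangeI[of ?e "Add s t" for s t] by auto
  show "\<forall>a. \<forall>x\<in>range ?e. vsmul L a x \<in> range ?e"
    using rangeI[of ?e "Smul a t" for a t] by auto
  show "\<forall>x\<in>range ?e. \<forall>y\<in>range ?e. lbr L x y \<in> range ?e"
    using rangeI[of ?e "Br s t" for s t] by auto
  show "\<forall>x\<in>range ?e. q x \<in> range ?e"
    using rangeI[of ?e "Proj t" for t] by auto
qed

primrec encode_term :: "'k::field_char_0 lpd_term \<Rightarrow> 'k list" where
  "encode_term (Gen i) = [0, of_nat i]"
| "encode_term Zero = [1]"
| "encode_term (Add s t) = 2 # encode_term s @ encode_term t"
| "encode_term (Smul c t) = 3 # c # encode_term t"
| "encode_term (Br s t) = 4 # encode_term s @ encode_term t"
| "encode_term (Proj t) = 5 # encode_term t"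

lemma encode_term_append_eq:
  "encode_term s @ xs = encode_term t @ ys \<Longrightarrow> s = t \<and> xs = ys"
proof (induction s arbitrary: t xs ys)
  case (Add s1 s2)
  from Add.prems show ?case
    by (cases t) (auto dest!: Add.IH(1)[of "encode_term s2 @ xs" _ "encode_term _ @ ys", simplified] Add.IH(2))
next
  case (Br s1 s2)
  from Br.prems show ?case
    by (cases t) (auto dest!: Br.IH(1)[of "encode_term s2 @ xs" _ "encode_term _ @ ys", simplified] Br.IH(2))
next
  case (Smul c s)
  from Smul.prems show ?case by (cases t) (auto dest: Smul.IH)
next
  case (Proj s)
  from Proj.prems show ?case by (cases t) (auto dest: Proj.IH)
qed (case_tac t; simp)+

lemma inj_encode_term: "inj encode_term"
  using encode_term_append_eq[where xs = "[]" and ys = "[]"] by (auto intro: injI)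

definition transport :: "('a \<Rightarrow> 'c) \<Rightarrow> ('k::field, 'a) liealg \<Rightarrow> ('k, 'c) liealg"
  where "transport c L =
    \<lparr>vcar = c ` vcar L,
     vadd = \<lambda>x y. c (vadd L (inv_into (vcar L) c x) (inv_into (vcar L) c y)),
     vzero = c (vzero L),
     vsmul = \<lambda>a x. c (vsmul L a (inv_into (vcar L) c x)),
     lbr = \<lambda>x y. c (lbr L (inv_into (vcar L) c x) (inv_into (vcar L) c y))\<rparr>"

definition transport_fun :: "('a \<Rightarrow> 'c) \<Rightarrow> ('k::field, 'a) liealg \<Rightarrow> ('a \<Rightarrow> 'a) \<Rightarrow> 'c \<Rightarrow> 'c"
  where "transport_fun c L q = (\<lambda>x. c (q (inv_into (vcar L) c x)))"

lemma lpd_transport: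
  assumes L: "lpd L q" and c: "inj_on c (vcar L)"
  shows "lpd (transport c L) (transport_fun c L q)"
proof -
  interpret lie_alg L using L unfolding lpd_def lie_alg_def by blast
  have q: "\<And>x. x \<in> vcar L \<Longrightarrow> q x \<in> vcar L"
    "\<And>x y. x \<in> vcar L \<Longrightarrow> y \<in> vcar L \<Longrightarrow> q (vadd L x y) = vadd L (q x) (q y)"
    "\<And>a x. x \<in> vcar L \<Longrightarrow> q (vsmul L a x) = vsmul L a (q x)"
    "\<And>x. x \<in> vcar L \<Longrightarrow> q (q x) = q x"
    "\<And>x y. x \<in> vcar L \<Longrightarrow> y \<in> vcar L \<Longrightarrow> q (lbr L x y) = vadd L (lbr L (q x) y) (lbr L x (q y))"
    using L unfolding lpd_def linear_map_on_def by blast+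
  have "\<forall>x\<in>vcar L. \<exists>y\<in>vcar L. c (vadd L x y) = c (vzero L)"
    using add_neg smul_closed by metis
  then have "vector_space_on (transport c L)"
    unfolding vector_space_on_def transport_def using c
    by (simp add: add_ac smul_add add_smul)
  then have "lie_algebra (transport c L)"
    unfolding lie_algebra_def using c by (simp add: transport_def br_add_left br_add_right jacobi)
  then show ?thesis
    unfolding lpd_def linear_map_on_def using c by (simp add: transport_def transport_fun_def q)
qed

lemma lpd_hom_untransport:
  assumes L: "lpd L q" and c: "inj_on c (vcar L)"
    and h: "lpd_hom F p (transport c L) (transport_fun c L q) h"
  shows "lpd_hom F p L q (\<lambda>x. inv_into (vcar L) c (h x))"
proof -
  interpret lie_alg L using L unfolding lpd_def lie_alg_def by blast
  have "\<And>x. x \<in> vcar L \<Longrightarrow> q x \<in> vcar L" using L unfolding lpd_def linear_map_on_def by blast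
  moreover have "\<And>x. x \<in> vcar F \<Longrightarrow> inv_into (vcar L) c (h x) \<in> vcar L"
    using h unfolding lpd_hom_def lie_hom_def linear_map_on_def transport_def
    by (simp add: inv_into_into)
  ultimately show ?thesis
    using h c unfolding lpd_hom_def lie_hom_def linear_map_on_def transport_def transport_fun_def
    by simp
qed

text \<open>The test objects in the definition of free_lpd all live in the type 'k list, but
  every finitely generated LPD embeds there via its term encoding.\<close>

lemma free_lpd_extends:
  fixes F :: "('k::field_char_0, 'a) liealg" and L :: "('k, 'b) liealg"
  assumes free: "free_lpd F p n m" and L: "lpd L q" and G: "\<forall>i<n. G i \<in> vcar L"
  shows "\<exists>h. lpd_hom F p L q h \<and> (\<forall>i<n. h (m i) = G i)"
proof -
  define G' where "G' i = (if i < n then G i else vzero L)" for i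
  have G': "\<And>i. G' i \<in> vcar L"
    using L G unfolding G'_def lpd_def lie_algebra_def vector_space_on_def by auto
  define S where "S = range (lpd_eval L q G')"
  define M where "M = L\<lparr>vcar := S\<rparr>"
  have M: "lpd M q" unfolding M_def S_def by (rule lpd_generated[OF L G'])
  define code where "code x = encode_term (SOME t. lpd_eval L q G' t = x)" for x
  have code: "inj_on code (vcar M)"
  proof (rule inj_onI)
    fix x y assume xy: "x \<in> vcar M" "y \<in> vcar M" "code x = code y"
    then have "(SOME t. lpd_eval L q G' t = x) = (SOME t. lpd_eval L q G' t = y)"
      using inj_encode_term unfolding code_def inj_def by blast
    moreover have "\<exists>t. lpd_eval L q G' t = x" "\<exists>t. lpd_eval L q G' t = y"
      using xy by (auto simp: M_def S_def)
    ultimately show "x = y" by (metis (mono_tags) someI_ex)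
  qed
  have GM: "\<And>i. G' i \<in> vcar M" by (simp add: M_def S_def range_eqI[of _ _ "Gen _"])
  have "\<forall>i<n. code (G' i) \<in> vcar (transport code M)" using GM by (simp add: transport_def)
  then obtain h where h: "lpd_hom F p (transport code M) (transport_fun code M q) h"
    and hm: "\<forall>i<n. h (m i) = code (G' i)"
    using free lpd_transport[OF M code] unfolding free_lpd_def
    by (elim conjE allE[of _ "transport code M"] allE[of _ "transport_fun code M q"]
        allE[of _ "\<lambda>i. code (G' i)"]) blast
  define h' where "h' x = inv_into (vcar M) code (h x)" for x
  have "lpd_hom F p M q h'"
    unfolding h'_def by (rule lpd_hom_untransport[OF M code h])
  then have "lpd_hom F p L q h'"
    unfolding M_def by (rule lpd_hom_subalgebra) (use lpd_eval_closed[OF L] G' in \<open>auto simp: S_def\<close>)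
  moreover have "\<forall>i<n. h' (m i) = G i"
    using hm GM code by (simp add: h'_def) (metis G'_def inv_into_f_f)
  ultimately show ?thesis by blast
qed
theorem theorem2:
  fixes F :: "('k::field_char_0, 'a) liealg" and p :: "'a \<Rightarrow> 'a"
    and n :: nat and m :: "nat \<Rightarrow> 'a"
  assumes "free_lpd F p n m"
  shows "representation (kerL F p) (imV F p) (lbr F)
    \<and> (\<forall>(P :: ('k, 'p) liealg) (U :: ('k, 'u) vspace) act f g.
         representation P U act
         \<and> f ` ((\<lambda>i. vsub F (m i) (p (m i))) ` {..<n}) \<subseteq> vcar P
         \<and> g ` ((\<lambda>i. p (m i)) ` {..<n}) \<subseteq> vcar U
         \<longrightarrow> (\<exists>\<phi> \<psi>. rep_hom (kerL F p) (imV F p) (lbr F) P U act \<phi> \<psi>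
                 \<and> (\<forall>x \<in> (\<lambda>i. vsub F (m i) (p (m i))) ` {..<n}. \<phi> x = f x)
                 \<and> (\<forall>y \<in> (\<lambda>i. p (m i)) ` {..<n}. \<psi> y = g y)))"
proof -
  have F: "lpd F p" and m: "\<forall>i<n. m i \<in> vcar F"
    using assms unfolding free_lpd_def by blast+
  show ?thesis
  proof (intro conjI allI impI)
    show "representation (kerL F p) (imV F p) (lbr F)" by (rule representation_ker_im[OF F])
    fix P :: "('k, 'p) liealg" and U :: "('k, 'u) vspace" and act f g
    assume A: "representation P U act
         \<and> f ` ((\<lambda>i. vsub F (m i) (p (m i))) ` {..<n}) \<subseteq> vcar P
         \<and> g ` ((\<lambda>i. p (m i)) ` {..<n}) \<subseteq> vcar U"
    then have rep: "representation P U act" by blast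
    have gens: "\<forall>i<n. (f (vsub F (m i) (p (m i))), g (p (m i))) \<in> vcar (semidirect P U act)"
      using A by (auto simp: semidirect_def)
    obtain \<Phi> where \<Phi>: "lpd_hom F p (semidirect P U act) (semidirect_proj P) \<Phi>"
      and \<Phi>m: "\<forall>i<n. \<Phi> (m i) = (f (vsub F (m i) (p (m i))), g (p (m i)))"
      using free_lpd_extends[OF assms lie_rep.lpd_semidirect[OF lie_rep.intro[OF rep]] gens]
      by blast
    show "\<exists>\<phi> \<psi>. rep_hom (kerL F p) (imV F p) (lbr F) P U act \<phi> \<psi>
                 \<and> (\<forall>x \<in> (\<lambda>i. vsub F (m i) (p (m i))) ` {..<n}. \<phi> x = f x)
                 \<and> (\<forall>y \<in> (\<lambda>i. p (m i)) ` {..<n}. \<psi> y = g y)"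
    proof (intro exI conjI ballI)
      show "rep_hom (kerL F p) (imV F p) (lbr F) P U act (\<lambda>x. fst (\<Phi> x)) (\<lambda>x. snd (\<Phi> x))"
        by (rule rep_hom_semidirect_components[OF F rep \<Phi>])
    next
      fix x assume "x \<in> (\<lambda>i. vsub F (m i) (p (m i))) ` {..<n}"
      then obtain i where "i < n" "x = vsub F (m i) (p (m i))" by blast
      then show "fst (\<Phi> x) = f x"
        using lpd_hom_semidirect_proj_components(1)[OF F rep \<Phi>] \<Phi>m m by simp
    next
      fix y assume "y \<in> (\<lambda>i. p (m i)) ` {..<n}"
      then obtain i where "i < n" "y = p (m i)" by blast
      then show "snd (\<Phi> y) = g y"
        using lpd_hom_semidirect_proj_components(2)[OF F rep \<Phi>] \<Phi>m m by simp
    qed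
  qed
qed
end
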